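(* Let $M=(M_{ij})$ be an $n\times n$ matrix (over a commutative ring) with $M_{ij}=0$ whenever $i+j\notin\{n+1,n+2\}$. Then $$\det(t-M)=\sum_{k=0}^n t^{n-k}(-1)^{\frac{k(k+1)}{2}}\sum_{(A,B)}\prod_{(i,j)\in A\cup B}M_{ij},$$ where the inner sum runs over pairs $(A,B)$ with $A\subset\{(i,j):i+j=n+1\}$, $B\subset\{(i,j):i+j=n+2\}$ (indices in $\{1,\dots,n\}$) such that: (1) $A$ and $B$ are both invariant under $(i,j)\mapsto(j,i)$; (2) the sets $\{i:(i,j)\in A\}$ and $\{i:(i,j)\in B\}$ are disjoint, and likewise $\{j:(i,j)\in A\}$ and $\{j:(i,j)\in B\}$ are disjoint; (3) $|A|+|B|=k$. *)

theory Defs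
  imports "Jordan_Normal_Form.Char_Poly"
begin

definition ent :: "'a mat \<Rightarrow> nat \<Rightarrow> nat \<Rightarrow> 'a" where
  "ent M i j = M $$ (i - 1, j - 1)"

definition antidiag :: "nat \<Rightarrow> nat \<Rightarrow> (nat \<times> nat) set" where
  "antidiag n d = {(i, j). i \<in> {1..n} \<and> j \<in> {1..n} \<and> i + j = d}"

definition swap_inv :: "(nat \<times> nat) set \<Rightarrow> bool" where
  "swap_inv A \<longleftrightarrow> (\<forall>(i, j) \<in> A. (j, i) \<in> A)"

definition adm_pairs :: "nat \<Rightarrow> nat \<Rightarrow> ((nat \<times> nat) set \<times> (nat \<times> nat) set) set" where
  "adm_pairs n k = {(A, B).
      A \<subseteq> antidiag n (n + 1) \<and> B \<subseteq> antidiag n (n + 2) \<and>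
      swap_inv A \<and> swap_inv B \<and>
      fst ` A \<inter> fst ` B = {} \<and> snd ` A \<inter> snd ` B = {} \<and>
      card A + card B = k}"

end

theory Submission
  imports Defs
begin

text \<open>
  Expand \<open>det (t - M)\<close> over permutations \<open>p\<close> and sets \<open>S\<close> of rows taking the entry \<open>-M\<^sub>i\<^sub>,\<^sub>p\<^sub>i\<close>
  (the remaining rows take \<open>t\<close> and need \<open>p i = i\<close>). A nonzero term has \<open>i + p i\<close> on one of
  the two anti-diagonals for \<open>i \<in> S\<close>. On the line \<open>1, n, 2, n - 1, \<dots>\<close> anti-diagonal partners
  are adjacent, so \<open>p\<close> moves every point by at most one step and is an involution; the entries
  \<open>(i, p i)\<close>, \<open>i \<in> S\<close>, split by anti-diagonal, form exactly the admissible pairs \<open>(A, B)\<close>, and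
  this correspondence is bijective. An involution with \<open>m\<close> moved points has sign \<open>(-1)^(m/2)\<close>,
  and at most one point of \<open>S\<close> is fixed, which turns \<open>sign p \<cdot> (-1)^k\<close> into \<open>(-1)^(k(k+1)/2)\<close>.
\<close>

lemma sign_involution:
  assumes "finite N" "p permutes N" "\<forall>x. p (p x) = x"
  shows "even (card {x. p x \<noteq> x}) \<and> sign p = (-1) ^ (card {x. p x \<noteq> x} div 2)"
  using assms(2,3)
proof (induction "card {x. p x \<noteq> x}" arbitrary: p rule: less_induct)
  case less
  show ?case
  proof (cases "{x. p x \<noteq> x} = {}")
    case True
    then have "p = id" by auto
    then show ?thesis using True by simp
  next
    case False
    then obtain a where a: "p a \<noteq> a" by auto
    define b where "b = p a"
    have pb: "p b = a" using less.prems(2) b_def by simp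
    have ab: "a \<noteq> b" using a b_def by simp
    define q where "q = transpose a b \<circ> p"
    have q: "q x = (if x = a then a else if x = b then b else p x)" for x
    proof -
      have "x \<noteq> a \<Longrightarrow> x \<noteq> b \<Longrightarrow> p x \<noteq> a \<and> p x \<noteq> b"
        using less.prems(2) b_def pb by metis
      then show ?thesis unfolding q_def using pb b_def by (auto simp: transpose_def)
    qed
    have "{x. p x \<noteq> x} \<subseteq> N" using permutes_not_in[OF less.prems(1)] by blast
    then have fin: "finite {x. p x \<noteq> x}" using assms(1) by (rule finite_subset)
    have ab_moved: "{a, b} \<subseteq> {x. p x \<noteq> x}" using a b_def pb ab by auto
    have card_q: "card {x. q x \<noteq> x} = card {x. p x \<noteq> x} - 2"
    proof -
      have "{x. q x \<noteq> x} = {x. p x \<noteq> x} - {a, b}" using q a b_def pb by auto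
      then show ?thesis using fin ab_moved ab by (simp add: card_Diff_subset)
    qed
    have "2 \<le> card {x. p x \<noteq> x}" using card_mono[OF fin ab_moved] ab by simp
    then obtain m where m: "card {x. p x \<noteq> x} = m + 2" using le_Suc_ex by (metis add.commute)
    have "a \<in> N" using a less.prems(1) by (meson permutes_not_in)
    moreover have "b \<in> N" using b_def \<open>a \<in> N\<close> less.prems(1) by (simp add: permutes_in_image)
    ultimately have q_perm: "q permutes N"
      unfolding q_def by (rule permutes_compose[OF less.prems(1) permutes_swap_id])
    have "\<forall>x. q (q x) = x" using q less.prems(2) pb b_def by (metis (no_types))
    then have IH: "even (card {x. q x \<noteq> x}) \<and> sign q = (-1) ^ (card {x. q x \<noteq> x} div 2)"
      using less.hyps[of q] card_q m q_perm by simp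
    have "p = transpose a b \<circ> q" unfolding q_def by (rule ext) simp
    moreover have "permutation q" using q_perm assms(1) permutation_permutes by blast
    ultimately have "sign p = sign (transpose a b) * sign q"
      by (simp add: sign_compose permutation_swap_id)
    also have "\<dots> = - sign q" using ab by (simp add: sign_swap_id)
    finally show ?thesis using IH card_q m by auto
  qed
qed

lemma involution_if_moves_up_by_one:
  fixes f :: "'a \<Rightarrow> int"
  assumes "finite N" "p permutes N" "inj_on f N"
    and near: "\<forall>y\<in>N. \<bar>f (p y) - f y\<bar> \<le> 1"
    and "x \<in> N" and up: "f (p x) = f x + 1"
  shows "p (p x) = x"
proof -
  define L where "L = {y\<in>N. f y \<le> f x}"
  have "finite L" "L \<subseteq> N" using assms(1) by (auto simp: L_def)
  have "card (p ` L) = card L"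
    using card_image[OF inj_on_subset[OF permutes_inj_on[OF assms(2)] \<open>L \<subseteq> N\<close>]] .
  moreover have "p x \<in> p ` L" "p x \<notin> L" using \<open>x \<in> N\<close> up by (auto simp: L_def)
  ultimately have "\<not> L \<subseteq> p ` L"
    using card_subset_eq[OF finite_imageI[OF \<open>finite L\<close>]] by metis
  \<comment> \<open>so some \<open>z \<in> L\<close> is the image of a point \<open>w\<close> above \<open>L\<close>; steps of length at most one
    force \<open>w = p x\<close> and \<open>z = x\<close>\<close>
  then obtain z where "z \<in> L" "z \<notin> p ` L" by auto
  moreover have "z \<in> p ` N" using \<open>z \<in> L\<close> \<open>L \<subseteq> N\<close> permutes_image[OF assms(2)] by auto
  ultimately obtain w where "w \<in> N" "w \<notin> L" "z = p w" by auto
  then have "f w = f (p x)" "f z = f x" using near up \<open>z \<in> L\<close> by (fastforce simp: L_def)+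
  moreover have "p x \<in> N" using assms(2) \<open>x \<in> N\<close> by (simp add: permutes_in_image)
  ultimately have "w = p x" "z = x"
    using assms(3) \<open>x \<in> N\<close> \<open>w \<in> N\<close> \<open>z \<in> L\<close> \<open>L \<subseteq> N\<close> by (auto dest: inj_onD)
  then show ?thesis using \<open>z = p w\<close> by simp
qed

lemma involution_if_moves_by_one:
  fixes f :: "'a \<Rightarrow> int"
  assumes "finite N" "p permutes N" "inj_on f N"
    and near: "\<forall>y\<in>N. \<bar>f (p y) - f y\<bar> \<le> 1"
  shows "p (p x) = x"
proof (cases "x \<in> N")
  case False
  then show ?thesis using assms(2) by (simp add: permutes_not_in)
next
  case True
  have "p x \<in> N" using assms(2) True by (simp add: permutes_in_image)
  consider "f (p x) = f x + 1" | "f (p x) = f x" | "- f (p x) = - f x + 1"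
    using near True by force
  then show ?thesis
  proof cases
    case 1
    then show ?thesis using involution_if_moves_up_by_one[OF assms True] by simp
  next
    case 2
    then show ?thesis using assms(3) True \<open>p x \<in> N\<close> by (auto dest: inj_onD)
  next
    case 3
    have "inj_on (\<lambda>y. - f y) N" using assms(3) by (auto simp: inj_on_def)
    moreover have "\<forall>y\<in>N. \<bar>- f (p y) - - f y\<bar> \<le> 1" using near by force
    ultimately show ?thesis using involution_if_moves_up_by_one[OF assms(1,2) _ _ True 3] by simp
  qed
qed

text \<open>The line \<open>0, n-1, 1, n-2, \<dots>\<close>: index \<open>i\<close> sits at position \<open>zigzag n i\<close>.\<close>
definition zigzag :: "nat \<Rightarrow> nat \<Rightarrow> int" where
  "zigzag n i = (if 2 * i < n then 2 * int i else 2 * int n - 1 - 2 * int i)"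

lemma inj_on_zigzag: "inj_on (zigzag n) {0..<n}"
  unfolding inj_on_def zigzag_def by (auto split: if_splits) presburger+

lemma zigzag_adjacent:
  assumes "i < n" "j < n" "i + j \<in> {n - 1, n}"
  shows "\<bar>zigzag n j - zigzag n i\<bar> \<le> 1"
  using assms unfolding zigzag_def by (auto split: if_splits)

lemma minus_one_power_involution_sign:
  assumes "even m" "e \<le> (1::nat)"
  shows "(-1 :: 'a :: ring_1) ^ (m div 2) * (-1) ^ (m + e) = (-1) ^ ((m + e) * (m + e + 1) div 2)"
proof -
  obtain t where m: "m = 2 * t" using assms(1) by blast
  have "e = 0 \<or> e = 1" using assms(2) by auto
  then have "even (m div 2 + (m + e) + (m + e) * (m + e + 1) div 2)"
  proof
    assume "e = 0"
    then have "(m + e) * (m + e + 1) div 2 = t + 2 * (t * t)" by (simp add: m algebra_simps)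
    then show ?thesis using \<open>e = 0\<close> by (simp add: m)
  next
    assume "e = 1"
    then have "(m + e) * (m + e + 1) div 2 = 1 + 3 * t + 2 * (t * t)" by (simp add: m algebra_simps)
    then show ?thesis using \<open>e = 1\<close> by (simp add: m)
  qed
  moreover have "(-1 :: 'a) ^ a = (-1) ^ b" if "even (a + b)" for a b
    using that by (simp add: minus_one_power_iff)
  ultimately have "(-1 :: 'a) ^ (m div 2 + (m + e)) = (-1) ^ ((m + e) * (m + e + 1) div 2)"
    by blast
  then show ?thesis by (simp only: power_add)
qed

lemma prod_const_poly: "(\<Prod>x\<in>A. [:f x:]) = [:\<Prod>x\<in>A. f x :: 'a :: comm_semiring_1:]"
  by (induction A rule: infinite_finite_induct) (auto simp: mult.commute)


definition char_poly_term :: "'a :: comm_ring_1 mat \<Rightarrow> (nat \<Rightarrow> nat) \<Rightarrow> nat set \<Rightarrow> 'a poly" where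
  "char_poly_term M p S = signof p * (\<Prod>i\<in>S. [:- M $$ (i, p i):]) *
     (\<Prod>i\<in>{0..<dim_row M} - S. if p i = i then [:0, 1:] else 0)"

lemma char_poly_eq_sum_char_poly_term:
  assumes "M \<in> carrier_mat n n"
  shows "char_poly M = (\<Sum>(p, S) \<in> {p. p permutes {0..<n}} \<times> Pow {0..<n}. char_poly_term M p S)"
proof -
  have entry: "char_poly_matrix M $$ (i, j) = [:- M $$ (i, j):] + (if j = i then [:0, 1:] else 0)"
    if "i < n" "j < n" for i j
    using that assms unfolding char_poly_matrix_def by auto
  have "char_poly M = (\<Sum>p | p permutes {0..<n}. signof p * (\<Prod>i = 0..<n. char_poly_matrix M $$ (i, p i)))"
    unfolding char_poly_def by (rule det_def'[OF char_poly_matrix_closed[OF assms]])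
  also have "\<dots> = (\<Sum>p | p permutes {0..<n}. \<Sum>S\<in>Pow {0..<n}. char_poly_term M p S)"
  proof (rule sum.cong[OF refl])
    fix p assume "p \<in> {p. p permutes {0..<n}}"
    then have "p i < n" if "i < n" for i using that by (auto simp: permutes_in_image)
    then have "(\<Prod>i = 0..<n. char_poly_matrix M $$ (i, p i)) =
        (\<Prod>i = 0..<n. [:- M $$ (i, p i):] + (if p i = i then [:0, 1:] else 0))"
      by (intro prod.cong) (auto simp: entry)
    also have "\<dots> = (\<Sum>S\<in>Pow {0..<n}. (\<Prod>i\<in>S. [:- M $$ (i, p i):]) *
        (\<Prod>i\<in>{0..<n} - S. if p i = i then [:0, 1:] else 0))"
      by (rule prod_add) simp
    finally show "signof p * (\<Prod>i = 0..<n. char_poly_matrix M $$ (i, p i)) =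
        (\<Sum>S\<in>Pow {0..<n}. char_poly_term M p S)"
      using assms by (simp add: char_poly_term_def sum_distrib_left mult.assoc)
  qed
  also have "\<dots> = (\<Sum>(p, S) \<in> {p. p permutes {0..<n}} \<times> Pow {0..<n}. char_poly_term M p S)"
    by (rule sum.cartesian_product)
  finally show ?thesis .
qed

text \<open>With 0-based indices the two anti-diagonals of the theorem are \<open>i + j \<in> {n - 1, n}\<close>.\<close>
definition two_band_terms :: "nat \<Rightarrow> ((nat \<Rightarrow> nat) \<times> nat set) set" where
  "two_band_terms n = {(p, S). p permutes {0..<n} \<and> S \<subseteq> {0..<n} \<and>
     (\<forall>i\<in>{0..<n} - S. p i = i) \<and> (\<forall>i\<in>S. i + p i \<in> {n - 1, n})}"

lemma char_poly_eq_sum_two_band_terms: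
  assumes "M \<in> carrier_mat n n"
    and zero: "\<And>i j. i < n \<Longrightarrow> j < n \<Longrightarrow> i + j \<notin> {n - 1, n} \<Longrightarrow> M $$ (i, j) = 0"
  shows "char_poly M = (\<Sum>(p, S) \<in> two_band_terms n. char_poly_term M p S)"
  unfolding char_poly_eq_sum_char_poly_term[OF assms(1)]
proof (rule sum.mono_neutral_right)
  show "finite ({p. p permutes {0..<n}} \<times> Pow {0..<n})" by (simp add: finite_permutations)
  show "two_band_terms n \<subseteq> {p. p permutes {0..<n}} \<times> Pow {0..<n}"
    by (auto simp: two_band_terms_def)
  show "\<forall>x \<in> {p. p permutes {0..<n}} \<times> Pow {0..<n} - two_band_terms n.
      (case x of (p, S) \<Rightarrow> char_poly_term M p S) = 0"
  proof (intro ballI)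
    fix x assume x: "x \<in> {p. p permutes {0..<n}} \<times> Pow {0..<n} - two_band_terms n"
    obtain p S where x_eq: "x = (p, S)" by fastforce
    have p: "p permutes {0..<n}" and "S \<subseteq> {0..<n}" using x x_eq by auto
    then consider i where "i \<in> {0..<n} - S" "p i \<noteq> i" | i where "i \<in> S" "i + p i \<notin> {n - 1, n}"
      using x x_eq p by (auto simp: two_band_terms_def)
    then have "char_poly_term M p S = 0"
    proof cases
      case 1
      then have "(\<Prod>i\<in>{0..<n} - S. if p i = i then [:0, 1:] else 0) = (0 :: 'a poly)"
        by (intro prod_zero) auto
      then show ?thesis using assms(1) by (simp add: char_poly_term_def)
    next
      case 2
      then have "M $$ (i, p i) = 0"
        using zero \<open>S \<subseteq> {0..<n}\<close> permutes_in_image[OF p] by auto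
      then have "(\<Prod>i\<in>S. [:- M $$ (i, p i):]) = 0"
        using 2 \<open>S \<subseteq> {0..<n}\<close> by (intro prod_zero) (auto intro: finite_subset)
      then show ?thesis by (simp add: char_poly_term_def)
    qed
    then show "(case x of (p, S) \<Rightarrow> char_poly_term M p S) = 0" using x_eq by simp
  qed
qed

lemma two_band_involution:
  assumes "(p, S) \<in> two_band_terms n"
  shows "p (p x) = x"
proof -
  from assms have p: "p permutes {0..<n}"
    and fixed: "\<forall>i\<in>{0..<n} - S. p i = i" and band: "\<forall>i\<in>S. i + p i \<in> {n - 1, n}"
    by (auto simp: two_band_terms_def)
  have "\<bar>zigzag n (p y) - zigzag n y\<bar> \<le> 1" if y: "y \<in> {0..<n}" for y
  proof (cases "y \<in> S")
    case True
    moreover have "p y \<in> {0..<n}" using permutes_in_image[OF p] y by simp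
    ultimately show ?thesis using zigzag_adjacent band y by simp
  next
    case False
    then show ?thesis using fixed y by simp
  qed
  then show ?thesis using involution_if_moves_by_one[OF _ p inj_on_zigzag] by simp
qed

lemma two_band_closed:
  assumes "(p, S) \<in> two_band_terms n" "i \<in> S"
  shows "p i \<in> S"
proof (rule ccontr)
  assume "p i \<notin> S"
  from assms have "p permutes {0..<n}" "S \<subseteq> {0..<n}" "\<forall>i\<in>{0..<n} - S. p i = i"
    by (auto simp: two_band_terms_def)
  then have "p (p i) = p i" using \<open>p i \<notin> S\<close> assms(2) by (auto simp: permutes_in_image)
  then show False using two_band_involution[OF assms(1)] \<open>p i \<notin> S\<close> assms(2) by simp
qed

lemma card_two_band_fixed_points:
  assumes "(p, S) \<in> two_band_terms n"
  shows "card {i\<in>S. p i = i} \<le> 1"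
proof -
  from assms have band: "\<forall>i\<in>S. i + p i \<in> {n - 1, n}" and S: "S \<subseteq> {0..<n}"
    by (auto simp: two_band_terms_def)
  have "a = b" if "a \<in> {i\<in>S. p i = i}" "b \<in> {i\<in>S. p i = i}" for a b
  proof -
    have "a + a = n - 1 \<or> a + a = n" "b + b = n - 1 \<or> b + b = n" "a < n"
      using that band S by auto
    then show ?thesis by presburger
  qed
  moreover have "finite S" using S by (rule finite_subset) simp
  then have "finite {i\<in>S. p i = i}" by simp
  ultimately show ?thesis by (simp add: card_le_Suc0_iff_eq)
qed

lemma char_poly_term_two_band:
  assumes "M \<in> carrier_mat n n" "(p, S) \<in> two_band_terms n"
  shows "char_poly_term M p S =
    [:0, 1:] ^ (n - card S) * [:(-1) ^ (card S * (card S + 1) div 2) * (\<Prod>i\<in>S. M $$ (i, p i)):]"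
proof -
  from assms(2) have p: "p permutes {0..<n}" and S: "S \<subseteq> {0..<n}"
    and fixed: "\<forall>i\<in>{0..<n} - S. p i = i" by (auto simp: two_band_terms_def)
  have "finite S" using S finite_subset by blast
  define m where "m = card {x. p x \<noteq> x}"
  have sign: "even m \<and> sign p = (-1) ^ (m div 2)"
    unfolding m_def using sign_involution[OF _ p] two_band_involution[OF assms(2)] by simp
  have "{x. p x \<noteq> x} \<subseteq> S" using fixed permutes_not_in[OF p] by blast
  then have "S = {x. p x \<noteq> x} \<union> {i\<in>S. p i = i}" by blast
  then have card_S: "card S = m + card {i\<in>S. p i = i}"
    unfolding m_def using \<open>finite S\<close> by (metis (no_types, lifting) card_Un_disjoint disjoint_iff
        finite_Un mem_Collect_eq)
  have "(\<Prod>i\<in>{0..<n} - S. if p i = i then [:0, 1:] else 0) = (\<Prod>i\<in>{0..<n} - S. [:0, 1 :: 'a:])"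
    using fixed by (intro prod.cong) auto
  also have "\<dots> = [:0, 1:] ^ (n - card S)" using card_Diff_subset[OF \<open>finite S\<close> S] by simp
  finally have diagonal:
    "(\<Prod>i\<in>{0..<n} - S. if p i = i then [:0, 1:] else 0) = [:0, 1 :: 'a:] ^ (n - card S)" .
  have "(-1 :: 'a poly) ^ k = [:(-1) ^ k:]" for k by (induction k) simp_all
  then have "signof p = ([:(-1) ^ (m div 2):] :: 'a poly)" using sign by simp
  then have "signof p * (\<Prod>i\<in>S. [:- M $$ (i, p i):]) =
      [:(-1) ^ (m div 2) * ((-1) ^ card S * (\<Prod>i\<in>S. M $$ (i, p i))):]"
    by (simp add: prod_const_poly prod_uminus)
  also have "\<dots> = [:(-1) ^ (card S * (card S + 1) div 2) * (\<Prod>i\<in>S. M $$ (i, p i)):]"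
    unfolding card_S mult.assoc[symmetric]
      minus_one_power_involution_sign[OF conjunct1[OF sign] card_two_band_fixed_points[OF assms(2)]]
    by (rule refl)
  finally show ?thesis using assms(1) diagonal by (simp add: char_poly_term_def mult.commute)
qed

definition entry_index :: "(nat \<Rightarrow> nat) \<Rightarrow> nat \<Rightarrow> nat \<times> nat" where
  "entry_index p i = (Suc i, Suc (p i))"

definition band_pairs :: "nat \<Rightarrow> (nat \<Rightarrow> nat) \<Rightarrow> nat set \<Rightarrow> (nat \<times> nat) set \<times> (nat \<times> nat) set" where
  "band_pairs n p S =
     (entry_index p ` {i\<in>S. i + p i = n - 1}, entry_index p ` {i\<in>S. i + p i = n})"

lemma inj_entry_index: "inj_on (entry_index p) A"
  by (auto simp: inj_on_def entry_index_def)

lemma band_pairs_union: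
  assumes "(p, S) \<in> two_band_terms n"
  shows "fst (band_pairs n p S) \<union> snd (band_pairs n p S) = entry_index p ` S"
proof -
  have "S = {i\<in>S. i + p i = n - 1} \<union> {i\<in>S. i + p i = n}"
    using assms by (auto simp: two_band_terms_def)
  then show ?thesis unfolding band_pairs_def by (metis fst_conv snd_conv image_Un)
qed

lemma prod_band_pairs:
  assumes "(p, S) \<in> two_band_terms n"
  shows "(\<Prod>(i, j) \<in> fst (band_pairs n p S) \<union> snd (band_pairs n p S). ent M i j) =
    (\<Prod>i\<in>S. M $$ (i, p i))"
  unfolding band_pairs_union[OF assms] prod.reindex[OF inj_entry_index]
  by (simp add: entry_index_def ent_def)

lemma band_pairs_adm:
  assumes D: "(p, S) \<in> two_band_terms n"
  shows "band_pairs n p S \<in> adm_pairs n (card S)"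
proof -
  from D have S: "S \<subseteq> {0..<n}" and band: "\<forall>i\<in>S. i + p i \<in> {n - 1, n}"
    by (auto simp: two_band_terms_def)
  have inv: "p (p i) = i" for i using two_band_involution[OF D] .
  have closed: "p i \<in> S" if "i \<in> S" for i using two_band_closed[OF D that] .
  define S1 where "S1 = {i\<in>S. i + p i = n - 1}"
  define S2 where "S2 = {i\<in>S. i + p i = n}"
  define A where "A = entry_index p ` S1"
  define B where "B = entry_index p ` S2"
  have bp: "band_pairs n p S = (A, B)" by (simp add: band_pairs_def A_def B_def S1_def S2_def)
  have "S1 \<inter> S2 = {}" using S by (auto simp: S1_def S2_def)
  moreover have "S1 \<union> S2 = S" using band by (auto simp: S1_def S2_def)
  moreover have "finite S" using S finite_subset by blast
  ultimately have "card S1 + card S2 = card S" by (metis card_Un_disjoint finite_Un)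
  then have card: "card A + card B = card S"
    by (simp add: A_def B_def card_image[OF inj_entry_index])
  have entry_antidiag: "entry_index p i \<in> antidiag n (i + p i + 2)" if "i \<in> S" for i
  proof -
    have "i \<in> {0..<n}" "p i \<in> {0..<n}" using that closed[OF that] S by auto
    then show ?thesis by (auto simp: entry_index_def antidiag_def)
  qed
  have A_antidiag: "A \<subseteq> antidiag n (n + 1)"
  proof
    fix z assume "z \<in> A"
    then obtain i where "i \<in> S" "i + p i = n - 1" "z = entry_index p i" by (auto simp: A_def S1_def)
    moreover from this have "i + p i + 2 = n + 1" using S by auto
    ultimately show "z \<in> antidiag n (n + 1)" using entry_antidiag by metis
  qed
  have B_antidiag: "B \<subseteq> antidiag n (n + 2)"
  proof
    fix z assume "z \<in> B"
    then obtain i where "i \<in> S" "i + p i = n" "z = entry_index p i" by (auto simp: B_def S2_def)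
    then show "z \<in> antidiag n (n + 2)" using entry_antidiag by (metis add_2_eq_Suc')
  qed
  have swap_image: "swap_inv (entry_index p ` T)" if "\<forall>i\<in>T. p i \<in> T" for T
    unfolding swap_inv_def
  proof
    fix z assume "z \<in> entry_index p ` T"
    then obtain i where "i \<in> T" "z = entry_index p i" by auto
    then have "entry_index p (p i) \<in> entry_index p ` T" using that by blast
    then show "case z of (a, b) \<Rightarrow> (b, a) \<in> entry_index p ` T"
      using \<open>z = entry_index p i\<close> inv by (simp add: entry_index_def)
  qed
  have "\<forall>i\<in>S1. p i \<in> S1" "\<forall>i\<in>S2. p i \<in> S2"
    using closed inv by (auto simp: S1_def S2_def add.commute)
  then have swap: "swap_inv A" "swap_inv B" unfolding A_def B_def by (simp_all add: swap_image)
  have fst_disjoint: "fst ` A \<inter> fst ` B = {}"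
    using \<open>S1 \<inter> S2 = {}\<close> by (auto simp: A_def B_def entry_index_def)
  have "inj p" using inv by (metis injI)
  then have snd_disjoint: "snd ` A \<inter> snd ` B = {}"
    using \<open>S1 \<inter> S2 = {}\<close> by (auto simp: A_def B_def entry_index_def inj_eq)
  show ?thesis
    using bp card A_antidiag B_antidiag swap fst_disjoint snd_disjoint by (simp add: adm_pairs_def)
qed

lemma char_poly_term_band_pairs:
  assumes "M \<in> carrier_mat n n" "(p, S) \<in> two_band_terms n" "band_pairs n p S = (A, B)"
  shows "char_poly_term M p S = [:0, 1:] ^ (n - (card A + card B)) *
    [:(-1) ^ ((card A + card B) * (card A + card B + 1) div 2) * (\<Prod>(i, j) \<in> A \<union> B. ent M i j):]"
proof -
  have "card A + card B = card S" using band_pairs_adm[OF assms(2)] assms(3) by (simp add: adm_pairs_def)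
  moreover have "(\<Prod>(i, j) \<in> A \<union> B. ent M i j) = (\<Prod>i\<in>S. M $$ (i, p i))"
    using prod_band_pairs[OF assms(2), of M] assms(3) by simp
  ultimately show ?thesis using char_poly_term_two_band[OF assms(1,2)] by simp
qed

lemma inj_on_band_pairs: "inj_on (\<lambda>(p, S). band_pairs n p S) (two_band_terms n)"
proof (rule inj_onI, clarify)
  fix p S q T
  assume D: "(p, S) \<in> two_band_terms n" "(q, T) \<in> two_band_terms n"
    and "band_pairs n p S = band_pairs n q T"
  then have graph: "entry_index p ` S = entry_index q ` T" using band_pairs_union by metis
  have "fst ` entry_index p ` S = Suc ` S" "fst ` entry_index q ` T = Suc ` T"
    by (simp_all add: image_image entry_index_def)
  then have "Suc ` S = Suc ` T" using graph by metis
  then have "S = T" by (simp add: inj_image_eq_iff)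
  have "p i = q i" for i
  proof (cases "i \<in> S")
    case True
    then have "entry_index p i \<in> entry_index q ` S" using graph \<open>S = T\<close> by blast
    then show ?thesis by (auto simp: entry_index_def)
  next
    case False
    then show ?thesis using D \<open>S = T\<close> by (cases "i < n") (auto simp: two_band_terms_def permutes_not_in)
  qed
  then show "p = q \<and> S = T" using \<open>S = T\<close> by auto
qed

text \<open>
  Row \<open>Suc i\<close> meets the anti-diagonals \<open>n + 1\<close> and \<open>n + 2\<close> in the columns \<open>n - i\<close> and
  \<open>Suc n - i\<close>, that is, at the 0-based columns \<open>n - Suc i\<close> and \<open>n - i\<close>.
\<close>
definition band_perm :: "nat \<Rightarrow> (nat \<times> nat) set \<Rightarrow> (nat \<times> nat) set \<Rightarrow> nat \<Rightarrow> nat" where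
  "band_perm n A B i =
     (if (Suc i, n - i) \<in> A then n - Suc i else if (Suc i, Suc n - i) \<in> B then n - i else i)"

definition band_support :: "nat \<Rightarrow> (nat \<times> nat) set \<Rightarrow> (nat \<times> nat) set \<Rightarrow> nat set" where
  "band_support n A B = {i. (Suc i, n - i) \<in> A \<or> (Suc i, Suc n - i) \<in> B}"

lemma adm_pairs_row_A:
  assumes "(A, B) \<in> adm_pairs n k" "(a, b) \<in> A"
  shows "0 < a \<and> a \<le> n \<and> a + b = Suc n"
  using assms by (auto simp: adm_pairs_def antidiag_def)

lemma adm_pairs_row_B:
  assumes "(A, B) \<in> adm_pairs n k" "(a, b) \<in> B"
  shows "1 < a \<and> a \<le> n \<and> a + b = Suc (Suc n)"
  using assms by (auto simp: adm_pairs_def antidiag_def)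

lemma adm_pairs_row_disjoint:
  assumes "(A, B) \<in> adm_pairs n k" "(a, b) \<in> A"
  shows "(a, b') \<notin> B"
proof
  assume "(a, b') \<in> B"
  then have "a \<in> fst ` A \<inter> fst ` B" using assms(2) by force
  then show False using assms(1) unfolding adm_pairs_def by blast
qed

lemma band_perm_involution:
  assumes adm: "(A, B) \<in> adm_pairs n k"
  shows "band_perm n A B (band_perm n A B i) = i"
proof -
  have swap_A: "(b, a) \<in> A" if "(a, b) \<in> A" for a b
    using adm that by (auto simp: adm_pairs_def swap_inv_def)
  have swap_B: "(b, a) \<in> B" if "(a, b) \<in> B" for a b
    using adm that by (auto simp: adm_pairs_def swap_inv_def)
  consider (A) "(Suc i, n - i) \<in> A" | (B) "(Suc i, n - i) \<notin> A" "(Suc i, Suc n - i) \<in> B"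
    | (fixed) "(Suc i, n - i) \<notin> A" "(Suc i, Suc n - i) \<notin> B" by blast
  then show ?thesis
  proof cases
    case A
    then have "i < n" using adm_pairs_row_A[OF adm A] by simp
    moreover have "(n - i, Suc i) \<in> A" using swap_A[OF A] .
    ultimately show ?thesis using A by (simp add: band_perm_def Suc_diff_Suc)
  next
    case B
    then have "0 < i" "i < n" using adm_pairs_row_B[OF adm B(2)] by simp_all
    moreover have "(Suc n - i, Suc i) \<in> B" using swap_B[OF B(2)] .
    moreover have "(Suc n - i, i) \<notin> A"
      using adm_pairs_row_disjoint[OF adm, of "Suc n - i" i "Suc i"] \<open>(Suc n - i, Suc i) \<in> B\<close> by blast
    ultimately show ?thesis using B by (simp add: band_perm_def Suc_diff_le)
  next
    case fixed
    then show ?thesis by (simp add: band_perm_def)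
  qed
qed

lemma band_perm_two_band:
  assumes adm: "(A, B) \<in> adm_pairs n k"
  shows "(band_perm n A B, band_support n A B) \<in> two_band_terms n"
proof -
  have support: "i < n" if "i \<in> band_support n A B" for i
    using that adm_pairs_row_A[OF adm, of "Suc i" "n - i"] adm_pairs_row_B[OF adm, of "Suc i" "Suc n - i"]
    by (auto simp: band_support_def)
  have "band_perm n A B permutes {0..<n}"
    unfolding permutes_def
  proof (intro conjI allI impI)
    fix x assume "x \<notin> {0..<n}"
    then have "x \<notin> band_support n A B" using support by auto
    then show "band_perm n A B x = x" by (simp add: band_perm_def band_support_def)
  next
    fix y show "\<exists>!x. band_perm n A B x = y"
      by (rule ex1I[of _ "band_perm n A B y"]) (use band_perm_involution[OF adm] in metis)+
  qed
  moreover have "i + band_perm n A B i \<in> {n - 1, n}" if "i \<in> band_support n A B" for i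
    using support[OF that] that by (auto simp: band_perm_def band_support_def)
  ultimately show ?thesis
    using support by (auto simp: two_band_terms_def band_perm_def band_support_def)
qed

lemma band_pairs_band_perm:
  assumes adm: "(A, B) \<in> adm_pairs n k"
  shows "band_pairs n (band_perm n A B) (band_support n A B) = (A, B)"
proof -
  let ?p = "band_perm n A B" and ?S = "band_support n A B"
  have A_iff: "i \<in> ?S \<and> i + ?p i = n - 1 \<longleftrightarrow> (Suc i, n - i) \<in> A" for i
    using adm_pairs_row_A[OF adm, of "Suc i" "n - i"] adm_pairs_row_B[OF adm, of "Suc i" "Suc n - i"]
    by (auto simp: band_perm_def band_support_def)
  have B_iff: "i \<in> ?S \<and> i + ?p i = n \<longleftrightarrow> (Suc i, Suc n - i) \<in> B" for i
    using adm_pairs_row_A[OF adm, of "Suc i" "n - i"] adm_pairs_row_B[OF adm, of "Suc i" "Suc n - i"]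
      adm_pairs_row_disjoint[OF adm, of "Suc i" "n - i" "Suc n - i"]
    by (auto simp: band_perm_def band_support_def)
  have A_entry: "entry_index ?p i = (Suc i, n - i)" if "(Suc i, n - i) \<in> A" for i
    using that adm_pairs_row_A[OF adm that] by (auto simp: entry_index_def band_perm_def)
  have B_entry: "entry_index ?p i = (Suc i, Suc n - i)" if "(Suc i, Suc n - i) \<in> B" for i
  proof -
    have "(Suc i, n - i) \<notin> A"
      using adm_pairs_row_disjoint[OF adm, of "Suc i" "n - i" "Suc n - i"] that by blast
    moreover have "i < n" using adm_pairs_row_B[OF adm that] by simp
    ultimately show ?thesis using that by (simp add: entry_index_def band_perm_def Suc_diff_le)
  qed
  have A_rows: "A = (\<lambda>i. (Suc i, n - i)) ` {i. (Suc i, n - i) \<in> A}"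
  proof (intro equalityI subsetI)
    fix z assume "z \<in> A"
    moreover obtain a b where z: "z = (a, b)" by fastforce
    ultimately have "z = (Suc (a - 1), n - (a - 1))" using adm_pairs_row_A[OF adm, of a b] by auto
    then show "z \<in> (\<lambda>i. (Suc i, n - i)) ` {i. (Suc i, n - i) \<in> A}" using \<open>z \<in> A\<close> by auto
  qed auto
  have B_rows: "B = (\<lambda>i. (Suc i, Suc n - i)) ` {i. (Suc i, Suc n - i) \<in> B}"
  proof (intro equalityI subsetI)
    fix z assume "z \<in> B"
    moreover obtain a b where z: "z = (a, b)" by fastforce
    ultimately have "z = (Suc (a - 1), Suc n - (a - 1))" using adm_pairs_row_B[OF adm, of a b] by auto
    then show "z \<in> (\<lambda>i. (Suc i, Suc n - i)) ` {i. (Suc i, Suc n - i) \<in> B}" using \<open>z \<in> B\<close> by auto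
  qed auto
  have "entry_index ?p ` {i\<in>?S. i + ?p i = n - 1} = A"
    unfolding A_iff by (subst (2) A_rows) (auto simp: A_entry)
  moreover have "entry_index ?p ` {i\<in>?S. i + ?p i = n} = B"
    unfolding B_iff by (subst (2) B_rows) (auto simp: B_entry)
  ultimately show ?thesis by (simp add: band_pairs_def)
qed

lemma band_pairs_image:
  "(\<lambda>(p, S). band_pairs n p S) ` two_band_terms n = (\<Union>k\<in>{0..n}. adm_pairs n k)"
proof (intro equalityI subsetI)
  fix AB assume "AB \<in> (\<lambda>(p, S). band_pairs n p S) ` two_band_terms n"
  then obtain p S where D: "(p, S) \<in> two_band_terms n" and AB: "AB = band_pairs n p S" by auto
  have "card S \<le> n" using D card_mono[of "{0..<n}" S] by (auto simp: two_band_terms_def)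
  then show "AB \<in> (\<Union>k\<in>{0..n}. adm_pairs n k)" using band_pairs_adm[OF D] AB by auto
next
  fix AB assume "AB \<in> (\<Union>k\<in>{0..n}. adm_pairs n k)"
  then obtain k where "AB \<in> adm_pairs n k" by blast
  moreover obtain A B where AB: "AB = (A, B)" by fastforce
  ultimately have adm: "(A, B) \<in> adm_pairs n k" by simp
  show "AB \<in> (\<lambda>(p, S). band_pairs n p S) ` two_band_terms n"
    unfolding AB using band_perm_two_band[OF adm] band_pairs_band_perm[OF adm]
    by (intro image_eqI[of _ _ "(band_perm n A B, band_support n A B)"]) auto
qed

lemma finite_adm_pairs: "finite (adm_pairs n k)"
proof -
  have "finite (antidiag n d)" for d
    by (rule finite_subset[of _ "{1..n} \<times> {1..n}"]) (auto simp: antidiag_def)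
  moreover have "adm_pairs n k \<subseteq> Pow (antidiag n (n + 1)) \<times> Pow (antidiag n (n + 2))"
    by (auto simp: adm_pairs_def)
  ultimately show ?thesis by (meson finite_Pow_iff finite_SigmaI finite_subset)
qed

lemma sum_adm_pairs_by_card:
  fixes Y :: "nat \<Rightarrow> 'a :: comm_ring_1 poly" and c :: "nat \<Rightarrow> 'a"
  shows "(\<Sum>k = 0..n. Y k * [:c k * (\<Sum>(A, B) \<in> adm_pairs n k. f A B):]) =
    (\<Sum>(A, B) \<in> (\<Union>k\<in>{0..n}. adm_pairs n k). Y (card A + card B) * [:c (card A + card B) * f A B:])"
proof -
  have "(\<Sum>(A, B) \<in> (\<Union>k\<in>{0..n}. adm_pairs n k). Y (card A + card B) * [:c (card A + card B) * f A B:]) =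
      (\<Sum>k = 0..n. \<Sum>(A, B) \<in> adm_pairs n k. Y (card A + card B) * [:c (card A + card B) * f A B:])"
  proof (rule sum.UNION_disjoint)
    show "\<forall>k\<in>{0..n}. finite (adm_pairs n k)" by (simp add: finite_adm_pairs)
    show "\<forall>k\<in>{0..n}. \<forall>l\<in>{0..n}. k \<noteq> l \<longrightarrow> adm_pairs n k \<inter> adm_pairs n l = {}"
      by (auto simp: adm_pairs_def)
  qed simp
  also have "\<dots> = (\<Sum>k = 0..n. \<Sum>(A, B) \<in> adm_pairs n k. Y k * [:c k * f A B:])"
    by (intro sum.cong refl) (auto simp: adm_pairs_def)
  also have "\<dots> = (\<Sum>k = 0..n. Y k * [:c k * (\<Sum>(A, B) \<in> adm_pairs n k. f A B):])"
    by (simp only: sum_distrib_left sum_to_poly[symmetric] case_prod_unfold)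
  finally show ?thesis ..
qed

theorem mainTheorem13:
  fixes M :: "'a :: comm_ring_1 mat" and n :: nat
  assumes "M \<in> carrier_mat n n"
    and "\<forall>i \<in> {1..n}. \<forall>j \<in> {1..n}. i + j \<notin> {n + 1, n + 2} \<longrightarrow> ent M i j = 0"
  shows "char_poly M =
    (\<Sum>k = 0..n. [:0, 1:] ^ (n - k) *
        [: (-1) ^ (k * (k + 1) div 2) *
           (\<Sum>(A, B) \<in> adm_pairs n k. \<Prod>(i, j) \<in> A \<union> B. ent M i j) :])"
proof -
  define R where "R = (\<lambda>(A, B). [:0, 1:] ^ (n - (card A + card B)) *
    [:(-1) ^ ((card A + card B) * (card A + card B + 1) div 2) * (\<Prod>(i, j) \<in> A \<union> B. ent M i j):])"
  have "M $$ (i, j) = 0" if "i < n" "j < n" "i + j \<notin> {n - 1, n}" for i j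
  proof -
    have "Suc i \<in> {1..n}" "Suc j \<in> {1..n}" "Suc i + Suc j \<notin> {n + 1, n + 2}" using that by auto
    then have "ent M (Suc i) (Suc j) = 0" using assms(2) by blast
    then show ?thesis by (simp add: ent_def)
  qed
  then have "char_poly M = (\<Sum>(p, S) \<in> two_band_terms n. char_poly_term M p S)"
    by (rule char_poly_eq_sum_two_band_terms[OF assms(1)])
  also have "\<dots> = sum (R \<circ> (\<lambda>(p, S). band_pairs n p S)) (two_band_terms n)"
    unfolding R_def using char_poly_term_band_pairs[OF assms(1)]
    by (intro sum.cong refl) (auto split: prod.split)
  also have "\<dots> = sum R ((\<lambda>(p, S). band_pairs n p S) ` two_band_terms n)"
    by (rule sum.reindex[OF inj_on_band_pairs, symmetric])
  also have "\<dots> = sum R (\<Union>k\<in>{0..n}. adm_pairs n k)"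
    by (simp only: band_pairs_image)
  also have "\<dots> = (\<Sum>k = 0..n. [:0, 1:] ^ (n - k) *
        [: (-1) ^ (k * (k + 1) div 2) * (\<Sum>(A, B) \<in> adm_pairs n k. \<Prod>(i, j) \<in> A \<union> B. ent M i j) :])"
    unfolding R_def by (rule sum_adm_pairs_by_card[symmetric])
  finally show ?thesis .
qed

end
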